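(* Let $\mathcal O$ be the ring of integers of a finite extension of $\mathbb{Q}_p$ whose maximal ideal $\mathfrak m$ is a divided-power ideal, with residue field $\mathbb F$. Let $P,Q\in\mathcal O[X]$ be monic polynomials with $\bar P=\bar Q$ in $\mathbb F[X]$. Then for every $n\ge1$ and every symmetric function $f\in\Lambda$, $f(P_n)\equiv f(Q_n)\pmod{n\mathfrak m}$. In particular $p_n(P)\equiv p_n(Q)\pmod{n\mathfrak m}$ for all $n\ge1$.
   Context: $\bar P$ denotes reduction modulo $\mathfrak m$. An ideal $\mathfrak a$ of a torsion-free $\mathbb{Z}_{(p)}$-algebra $A$ is a divided-power ideal if $a^p\in p\,\mathfrak a$ for all $a\in\mathfrak a$. If $P$ has roots $\alpha_1,\dots,\alpha_d$ (with multiplicity) in an extension of $\mathcal O$, then $P_n:=\prod_{i=1}^d(X-\alpha_i^n)\in\mathcal O[X]$, and similarly $Q_n$. $\Lambda=\mathbb{Z}[e_1,e_2,\dots]$ is the ring of integral symmetric functions; for monic $R=X^d+a_1X^{d-1}+\dots+a_d$, $e_n(R)=(-1)^na_n$ for $1\le n\le d$, $e_n(R)=0$ for $n>d$, and $f(R)$ is obtained by writing $f$ as an integer polynomial in the $e_n$ and substituting $e_n(R)$ (equivalently, evaluating $f$ at the roots of $R$, padded by zeros). $p_n(P)=\sum_i\alpha_i^n$. *)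

theory Defs
  imports "HOL-Computational_Algebra.Polynomial" "Jordan_Normal_Form.Char_Poly"
begin

text \<open>Abstract characterisation of the ring of integers O of a finite extension of Q_p:
  a complete discrete valuation ring (uniformiser pi) of characteristic 0 whose residue
  field O/(pi) is finite of characteristic p.\<close>
definition padic_integer_ring :: "nat \<Rightarrow> 'a::idom \<Rightarrow> bool" where
  "padic_integer_ring p \<pi> \<longleftrightarrow>
     prime p \<and> \<pi> \<noteq> 0 \<and> \<not> \<pi> dvd 1 \<and>
     (\<forall>x. x \<noteq> 0 \<longrightarrow> (\<exists>u k. u dvd 1 \<and> x = u * \<pi> ^ k)) \<and>
     inj (of_nat :: nat \<Rightarrow> 'a) \<and>
     \<pi> dvd of_nat p \<and>
     (\<exists>S. finite S \<and> (\<forall>x. \<exists>s\<in>S. \<pi> dvd (x - s))) \<and>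
     (\<forall>x :: nat \<Rightarrow> 'a. (\<forall>n. \<pi> ^ n dvd (x (Suc n) - x n)) \<longrightarrow>
         (\<exists>y. \<forall>n. \<pi> ^ n dvd (y - x n)))"

definition divided_power_max_ideal :: "nat \<Rightarrow> 'a::idom \<Rightarrow> bool" where
  "divided_power_max_ideal p \<pi> \<longleftrightarrow> (\<forall>a. \<pi> dvd a \<longrightarrow> of_nat p * \<pi> dvd a ^ p)"

text \<open>Companion matrix of a monic polynomial; its eigenvalues are the roots of P.\<close>
definition companion :: "'a::comm_ring_1 poly \<Rightarrow> 'a mat" where
  "companion P = (let d = degree P in
     mat d d (\<lambda>(i,j). if j = d - 1 then - coeff P i else if i = j + 1 then 1 else 0))"

text \<open>P_n = prod_i (X - alpha_i^n), realised as the characteristic polynomial of C_P^n.\<close>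
definition pow_roots_poly :: "'a::comm_ring_1 poly \<Rightarrow> nat \<Rightarrow> 'a poly" where
  "pow_roots_poly P n = char_poly (companion P ^\<^sub>m n)"

text \<open>Power sum p_n(P) = sum_i alpha_i^n = trace (C_P^n).\<close>
definition power_sum_poly :: "'a::comm_ring_1 poly \<Rightarrow> nat \<Rightarrow> 'a" where
  "power_sum_poly P n = (\<Sum>i<degree P. (companion P ^\<^sub>m n) $$ (i, i))"

text \<open>Elements of Lambda = Z[e_1, e_2, ...] as integer polynomial expressions in the e_n.\<close>
datatype symfun = SConst int | SE nat | SAdd symfun symfun | SMul symfun symfun

definition elem_sym :: "'a::comm_ring_1 poly \<Rightarrow> nat \<Rightarrow> 'a" where
  "elem_sym R n = (if n \<le> degree R then (-1) ^ n * coeff R (degree R - n) else 0)"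

fun eval_symfun :: "symfun \<Rightarrow> 'a::comm_ring_1 poly \<Rightarrow> 'a" where
  "eval_symfun (SConst c) R = of_int c"
| "eval_symfun (SE n) R = elem_sym R n"
| "eval_symfun (SAdd f g) R = eval_symfun f R + eval_symfun g R"
| "eval_symfun (SMul f g) R = eval_symfun f R * eval_symfun g R"

end

(* Realise P and Q by their companion matrices C_P and C_Q, which are congruent entrywise
   modulo pi, and write C_P = C_Q + E.  Expanding tr (C_P^n) into closed walks and grouping
   the walks into rotation classes, a class of words fixed by s rotations has n/s members, each
   of whose products contains at least s factors from (pi); since s pi divides pi^s (the
   divided-power hypothesis, through v(s!) <= s - 1), every class other than the walks of C_Q
   contributes a multiple of n pi.

   The coefficients of P_n = char_poly (C_P^n) are determined by the power sums
   p_i(P_n) = p_(ni)(P) through Newton's identities, and p_i(P_n) = p_i(Q_n) mod i n pi.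
   Newton's identities integrate: the two solutions differ by the factor exp (sum w_i X^i) with
   w_i in (n pi), a series = 1 mod n pi because x^m / m! lies in (c) for x in (c) when pi | c.
   Every f in Lambda is a polynomial in the e_k, so the congruence passes to f(P_n). *)

theory Submission
  imports Defs "HOL-Computational_Algebra.Formal_Power_Series"
begin

section \<open>Valuations\<close>

locale divided_power_dvr =
  fixes p :: nat and \<pi> :: "'a::idom"
  assumes prime_p: "prime p"
    and pi_not_unit: "\<not> \<pi> dvd 1"
    and unit_mult_pi_power: "x \<noteq> 0 \<Longrightarrow> \<exists>u k. u dvd 1 \<and> x = u * \<pi> ^ k"
    and inj_of_nat: "inj (of_nat :: nat \<Rightarrow> 'a)"
    and pi_dvd_p: "\<pi> dvd of_nat p"
    and p_mult_pi_dvd_pi_power: "of_nat p * \<pi> dvd \<pi> ^ p"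
begin

lemma of_nat_eq_0_iff [simp]: "(of_nat m :: 'a) = 0 \<longleftrightarrow> m = 0"
  using inj_of_nat by (metis injD of_nat_0)

lemma pi_nonzero: "\<pi> \<noteq> 0"
  using pi_dvd_p prime_p by (auto simp: prime_gt_0_nat)

lemma pi_power_dvd_one_iff: "\<pi> ^ k dvd 1 \<longleftrightarrow> k = 0"
  using pi_not_unit by (cases k) (auto dest: dvd_mult_right)

lemma unit_mult_pi_power_exponent_unique:
  assumes "u dvd 1" "u' dvd 1" "u * \<pi> ^ k = u' * \<pi> ^ k'"
  shows "k = k'"
proof -
  have "k \<le> k'" if "u dvd 1" "u' dvd 1" "u * \<pi> ^ k = u' * \<pi> ^ k'" for u u' k k'
  proof (rule ccontr)
    assume "\<not> k \<le> k'"
    then obtain j where "k = k' + Suc j"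
      by (metis add_Suc_right less_imp_Suc_add not_le)
    with that(3) have "u * \<pi> ^ Suc j = u'"
      using pi_nonzero by (simp add: power_add ac_simps)
    then have "\<pi> ^ Suc j dvd 1"
      using that(2) by (metis dvd_triv_right dvd_trans)
    then show False using pi_power_dvd_one_iff[of "Suc j"] by simp
  qed
  from this[OF assms] this[OF assms(2,1) assms(3)[symmetric]] show ?thesis by simp
qed

text \<open>The value at \<open>0\<close> is unspecified.\<close>
definition val :: "'a \<Rightarrow> nat" where
  "val x = (THE k. \<exists>u. u dvd 1 \<and> x = u * \<pi> ^ k)"

lemma val_unit_mult_pi_power: "u dvd 1 \<Longrightarrow> val (u * \<pi> ^ k) = k"
  unfolding val_def by (rule the_equality) (auto dest: unit_mult_pi_power_exponent_unique)

lemma unit_mult_pi_power_val: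
  assumes "x \<noteq> 0"
  obtains u where "u dvd 1" "x = u * \<pi> ^ val x"
  using unit_mult_pi_power[OF assms] val_unit_mult_pi_power by metis

lemma val_mult: "x \<noteq> 0 \<Longrightarrow> y \<noteq> 0 \<Longrightarrow> val (x * y) = val x + val y"
proof -
  assume "x \<noteq> 0" "y \<noteq> 0"
  then obtain u v where u: "u dvd 1" "x = u * \<pi> ^ val x" and v: "v dvd 1" "y = v * \<pi> ^ val y"
    by (metis unit_mult_pi_power_val)
  have "x * y = (u * v) * \<pi> ^ (val x + val y)"
    by (subst u(2), subst v(2)) (simp add: power_add ac_simps)
  then show ?thesis using u(1) v(1) by (simp add: val_unit_mult_pi_power)
qed

lemma val_unit: "u dvd 1 \<Longrightarrow> val u = 0"
  using val_unit_mult_pi_power[of u 0] by simp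

lemma val_pi_power: "val (\<pi> ^ k) = k"
  using val_unit_mult_pi_power[of 1 k] by simp

lemma val_power: "x \<noteq> 0 \<Longrightarrow> val (x ^ k) = k * val x"
  by (induction k) (simp_all add: val_mult val_unit)

lemma dvd_iff_val_le:
  assumes "x \<noteq> 0" "y \<noteq> 0"
  shows "x dvd y \<longleftrightarrow> val x \<le> val y"
proof
  assume "x dvd y"
  then obtain z where "y = x * z" ..
  with assms show "val x \<le> val y" by (simp add: val_mult)
next
  assume le: "val x \<le> val y"
  obtain u v where u: "u dvd 1" "x = u * \<pi> ^ val x" and v: "v dvd 1" "y = v * \<pi> ^ val y"
    using assms by (metis unit_mult_pi_power_val)
  have "x dvd \<pi> ^ val x" using u by (metis mult_unit_dvd_iff' dvd_refl)
  also have "\<pi> ^ val x dvd \<pi> ^ val y" using le by (rule le_imp_power_dvd)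
  also have "\<pi> ^ val y dvd y" using v by (metis dvd_triv_right)
  finally show "x dvd y" .
qed

abbreviation val_nat :: "nat \<Rightarrow> nat" where
  "val_nat m \<equiv> val (of_nat m)"

lemma val_nat_mult: "a \<noteq> 0 \<Longrightarrow> b \<noteq> 0 \<Longrightarrow> val_nat (a * b) = val_nat a + val_nat b"
  by (simp add: val_mult)

text \<open>Integers prime to \<open>p\<close> are units: a Bezout relation \<open>m x = 1 + p y\<close> would otherwise
  put \<open>1\<close> into \<open>(\<pi>)\<close>.\<close>
lemma val_nat_eq_0_if_not_dvd:
  assumes "\<not> p dvd m"
  shows "val_nat m = 0"
proof -
  have "m \<noteq> 0" using assms by (metis dvd_0_right)
  obtain x y where "m * x = Suc (p * y)"
    using bezout_prime[OF prime_p assms] by blast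
  then have "(of_nat m :: 'a) * of_nat x - of_nat p * of_nat y = 1"
    by (metis add_diff_cancel_right' mult_Suc of_nat_Suc of_nat_mult add.commute)
  then have "\<not> \<pi> dvd of_nat m"
    using pi_dvd_p pi_not_unit by (metis dvd_diff dvd_mult2)
  then have "val \<pi> > val (of_nat m :: 'a)"
    using \<open>m \<noteq> 0\<close> pi_nonzero by (subst (asm) dvd_iff_val_le) auto
  then show ?thesis using val_pi_power[of 1] by simp
qed

lemma val_nat_p_le: "val_nat p \<le> p - 1"
proof -
  have "val (of_nat p * \<pi>) \<le> val (\<pi> ^ p)"
    using p_mult_pi_dvd_pi_power pi_nonzero prime_p
    by (subst dvd_iff_val_le[symmetric]) (auto simp: prime_gt_0_nat)
  then show ?thesis
    using pi_nonzero prime_p val_pi_power[of 1] val_pi_power[of p]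
    by (simp add: val_mult prime_gt_0_nat)
qed

text \<open>Legendre's formula in recursive form.\<close>
lemma val_nat_fact: "val_nat (fact m) = val_nat p * (m div p) + val_nat (fact (m div p))"
proof (induction m)
  case 0
  then show ?case by simp
next
  case (Suc m)
  have fact_Suc_m: "val_nat (fact (Suc m)) = val_nat (Suc m) + val_nat (fact m)"
    using val_nat_mult[of "Suc m" "fact m"] by (simp add: fact_nonzero del: of_nat_mult)
  show ?case
  proof (cases "p dvd Suc m")
    case True
    define q where "q = Suc m div p"
    have q: "Suc m = p * q"
      unfolding q_def using True by (rule dvd_mult_div_cancel[symmetric])
    have "Suc m mod p = 0" using True by (rule dvd_imp_mod_0)
    then have q_Suc: "q = Suc (m div p)" unfolding q_def div_Suc by simp
    have "val_nat (Suc m) = val_nat (p * q)" by (simp only: q)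
    also have "\<dots> = val_nat p + val_nat q"
      using prime_p q_Suc by (intro val_nat_mult) (auto simp: prime_gt_0_nat)
    finally have val_Suc_m: "val_nat (Suc m) = val_nat p + val_nat q" .
    have "fact q = q * fact (m div p)" using q_Suc by simp
    then have val_fact_q: "val_nat (fact q) = val_nat q + val_nat (fact (m div p))"
      using q_Suc by (simp only:) (intro val_nat_mult; simp add: fact_nonzero)
    have "val_nat p * q = val_nat p + val_nat p * (m div p)" using q_Suc by simp
    then show ?thesis
      unfolding q_def[symmetric] using fact_Suc_m val_Suc_m val_fact_q Suc.IH by linarith
  next
    case False
    then have "Suc m div p = m div p"
      using div_Suc[of m p] by (auto simp: dvd_eq_mod_eq_0)
    then show ?thesis
      using fact_Suc_m Suc.IH val_nat_eq_0_if_not_dvd[OF False] by simp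
  qed
qed

lemma val_nat_fact_le: "val_nat (fact m) \<le> m - 1"
proof (induction m rule: less_induct)
  case (less m)
  define q where "q = m div p"
  show ?case
  proof (cases "q = 0")
    case True
    then show ?thesis using val_nat_fact[of m] by (simp add: q_def val_unit)
  next
    case False
    have "m \<noteq> 0" using False by (cases m) (auto simp: q_def)
    then have "q < m" "p * q \<le> m"
      using prime_gt_1_nat[OF prime_p] by (auto simp: q_def intro: div_less_dividend)
    then have "val_nat (fact m) \<le> (p - 1) * q + (q - 1)"
      using val_nat_fact[of m] val_nat_p_le less.IH[of q] by (simp add: q_def add_mono)
    also have "\<dots> = p * q - 1"
      using False prime_p by (cases p) (auto simp: prime_gt_0_nat)
    finally show ?thesis using \<open>p * q \<le> m\<close> by simp
  qed
qed

lemma fact_dvd_power_pred: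
  assumes "\<pi> dvd y"
  shows "of_nat (fact m) dvd y ^ (m - 1)"
proof (cases "y = 0")
  case True
  then show ?thesis by (cases "m \<le> 1") (auto simp: le_Suc_eq power_0_left)
next
  case False
  have "val \<pi> \<le> val y" using assms False pi_nonzero by (simp add: dvd_iff_val_le)
  then have "val_nat (fact m) \<le> val (y ^ (m - 1))"
    using val_nat_fact_le[of m] val_pi_power[of 1] val_power[OF False, of "m - 1"]
    by (simp add: order_trans)
  then show ?thesis using False by (simp add: dvd_iff_val_le fact_nonzero)
qed

lemma of_nat_mult_pi_dvd_pi_power:
  assumes "c \<ge> 1"
  shows "of_nat c * \<pi> dvd \<pi> ^ c"
proof -
  from assms have "c dvd fact c" by (simp add: dvd_fact)
  then obtain k where "fact c = c * k" ..
  then have "of_nat c dvd (of_nat (fact c) :: 'a)" by simp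
  also have "of_nat (fact c) dvd \<pi> ^ (c - 1)" by (rule fact_dvd_power_pred) simp
  finally have "of_nat c * \<pi> dvd \<pi> ^ (c - 1) * \<pi>" by (rule mult_dvd_mono) simp
  also have "\<pi> ^ (c - 1) * \<pi> = \<pi> ^ c" using assms by (cases c) simp_all
  finally show ?thesis .
qed

lemma fact_mult_dvd_power:
  assumes "\<pi> dvd c" "c dvd x" "m \<ge> 1"
  shows "of_nat (fact m) * c dvd x ^ m"
proof -
  have "of_nat (fact m) * c dvd c ^ (m - 1) * c"
    using fact_dvd_power_pred[OF assms(1)] by (rule mult_dvd_mono) simp
  also have "\<dots> = c ^ m" using assms(3) by (cases m) simp_all
  also have "c ^ m dvd x ^ m" using assms(2) by (rule dvd_power_same)
  finally show ?thesis .
qed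

end

lemma divided_power_dvr_if_padic:
  assumes "padic_integer_ring p \<pi>" "divided_power_max_ideal p \<pi>"
  shows "divided_power_dvr p \<pi>"
  using assms unfolding padic_integer_ring_def divided_power_max_ideal_def
  by unfold_locales auto

section \<open>Rotation classes of words\<close>

definition words :: "nat \<Rightarrow> nat \<Rightarrow> nat list set" where
  "words D n = {xs. set xs \<subseteq> {..<D} \<and> length xs = n}"

lemma finite_words [simp]: "finite (words D n)"
  unfolding words_def by (rule finite_lists_length_eq) simp

lemma words_Suc_Cons: "words D (Suc m) = (\<lambda>(ks, k). k # ks) ` (words D m \<times> {..<D})"
  unfolding words_def by (rule lists_length_Suc_eq)

lemma words_Suc_snoc: "words D (Suc m) = (\<lambda>(ks, k). ks @ [k]) ` (words D m \<times> {..<D})"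
proof
  show "(\<lambda>(ks, k). ks @ [k]) ` (words D m \<times> {..<D}) \<subseteq> words D (Suc m)"
    unfolding words_def by auto
  show "words D (Suc m) \<subseteq> (\<lambda>(ks, k). ks @ [k]) ` (words D m \<times> {..<D})"
  proof
    fix xs assume xs: "xs \<in> words D (Suc m)"
    then have "xs \<noteq> []" unfolding words_def by auto
    with xs have "butlast xs \<in> words D m" "last xs \<in> {..<D}"
      unfolding words_def by (auto dest: in_set_butlastD last_in_set)
    then show "xs \<in> (\<lambda>(ks, k). ks @ [k]) ` (words D m \<times> {..<D})"
      using \<open>xs \<noteq> []\<close> by (intro image_eqI[of _ _ "(butlast xs, last xs)"]) auto
  qed
qed

lemma nth_in_words: "xs \<in> words D n \<Longrightarrow> t < n \<Longrightarrow> xs ! t < D"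
  unfolding words_def by (auto simp: subset_iff)

definition cyclic_prod :: "(nat \<Rightarrow> nat \<Rightarrow> 'a::comm_monoid_mult) \<Rightarrow> nat list \<Rightarrow> 'a" where
  "cyclic_prod f xs = (\<Prod>t<length xs. f (xs ! t) (xs ! (Suc t mod length xs)))"

lemma cyclic_prod_rotate1: "cyclic_prod f (rotate1 xs) = cyclic_prod f xs"
proof (cases xs)
  case Nil
  then show ?thesis by simp
next
  case (Cons y ys)
  define n where "n = length ys"
  define g where "g t = f (xs ! t) (xs ! (Suc t mod Suc n))" for t
  have len: "length xs = Suc n" using Cons by (simp add: n_def)
  have "cyclic_prod f (rotate1 xs) = (\<Prod>t<Suc n. g (Suc t mod Suc n))"
    unfolding cyclic_prod_def g_def using len by (intro prod.cong) (simp_all add: nth_rotate1 mod_Suc_eq)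
  also have "\<dots> = (\<Prod>t<n. g (Suc t)) * g 0"
  proof -
    have "(\<Prod>t<n. g (Suc t mod Suc n)) = (\<Prod>t<n. g (Suc t))"
      by (rule prod.cong) simp_all
    then show ?thesis by (simp add: prod.lessThan_Suc)
  qed
  also have "\<dots> = (\<Prod>t<Suc n. g t)"
    by (simp only: prod.lessThan_Suc_shift) (rule mult.commute)
  also have "\<dots> = cyclic_prod f xs"
    by (simp only: cyclic_prod_def g_def len)
  finally show ?thesis .
qed

lemma cyclic_prod_rotate: "cyclic_prod f (rotate r xs) = cyclic_prod f xs"
  by (induction r) (simp_all add: cyclic_prod_rotate1)

definition rotations :: "'a list \<Rightarrow> 'a list set" where
  "rotations xs = range (\<lambda>r. rotate r xs)"

definition rotation_stabiliser :: "'a list \<Rightarrow> nat set" where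
  "rotation_stabiliser xs = {r \<in> {..<length xs}. rotate r xs = xs}"

lemma rotations_eq_image: "xs \<noteq> [] \<Longrightarrow> rotations xs = (\<lambda>r. rotate r xs) ` {..<length xs}"
  unfolding rotations_def by (auto intro!: image_eqI[of _ _ "_ mod length xs"] rotate_conv_mod)

lemma finite_rotations [simp]: "finite (rotations xs)"
proof (cases "xs = []")
  case True
  then show ?thesis by (simp add: rotations_def)
next
  case False
  then show ?thesis by (simp add: rotations_eq_image)
qed

lemma self_in_rotations: "xs \<in> rotations xs"
  unfolding rotations_def by (rule range_eqI[of _ _ 0]) simp

lemma rotate_add_mod_length: "rotate ((a + b) mod length xs) xs = rotate b (rotate a xs)"
  by (simp add: rotate_rotate add.commute flip: rotate_conv_mod)

lemma rotations_rotate [simp]: "rotations (rotate r xs) = rotations xs"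
proof -
  have "rotate r' xs = rotate (r' + (length xs - 1) * r) (rotate r xs)" for r'
  proof (cases "xs = []")
    case False
    have "r' + (length xs - 1) * r + r = r' + length xs * r"
      using False by (cases "length xs") (simp_all add: algebra_simps)
    moreover have "(r' + length xs * r) mod length xs = r' mod length xs" by simp
    ultimately show ?thesis by (metis rotate_rotate rotate_conv_mod)
  qed simp
  then show ?thesis
    unfolding rotations_def by (auto simp: rotate_rotate)
qed

lemma rotations_eq_if_in_rotations:
  assumes "ys \<in> rotations xs"
  shows "rotations ys = rotations xs"
proof -
  from assms obtain r where "ys = rotate r xs" unfolding rotations_def by blast
  then show ?thesis by simp
qed

lemma inj_on_add_mod: fixes r n :: nat shows "inj_on (\<lambda>h. (h + r) mod n) {..<n}"
proof -
  have le: "h = h'" if "h \<le> h'" "h' < n" "(h + r) mod n = (h' + r) mod n" for h h'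
  proof -
    have "n dvd h' - h" using that mod_eq_dvd_iff_nat[of "h + r" "h' + r" n] by simp
    moreover have "h' - h < n" using that by simp
    ultimately have "h' - h = 0" by (metis dvd_imp_le not_less zero_less_iff_neq_zero)
    then show ?thesis using that(1) by simp
  qed
  show ?thesis
  proof (rule inj_onI)
    fix h h' assume "h \<in> {..<n}" "h' \<in> {..<n}" "(h + r) mod n = (h' + r) mod n"
    then show "h = h'" using le[of h h'] le[of h' h] by (cases "h \<le> h'") auto
  qed
qed

lemma card_rotation_fibre:
  assumes "r0 < length xs"
  shows "card {r \<in> {..<length xs}. rotate r xs = rotate r0 xs} = card (rotation_stabiliser xs)"
proof (rule card_bij_eq)
  let ?n = "length xs"
  show "inj_on (\<lambda>h. (h + (?n - r0)) mod ?n) {r \<in> {..<?n}. rotate r xs = rotate r0 xs}"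
    "inj_on (\<lambda>h. (h + r0) mod ?n) (rotation_stabiliser xs)"
    unfolding rotation_stabiliser_def by (auto intro: inj_on_subset[OF inj_on_add_mod])
  have "rotate ((h + (?n - r0)) mod ?n) xs = xs" if "rotate h xs = rotate r0 xs" for h
  proof -
    have "rotate ((h + (?n - r0)) mod ?n) xs = rotate (?n - r0) (rotate r0 xs)"
      by (simp only: rotate_add_mod_length that)
    also have "\<dots> = xs" using assms by (simp add: rotate_rotate)
    finally show ?thesis .
  qed
  then show "(\<lambda>h. (h + (?n - r0)) mod ?n) ` {r \<in> {..<?n}. rotate r xs = rotate r0 xs}
      \<subseteq> rotation_stabiliser xs"
    unfolding rotation_stabiliser_def using assms by (auto intro!: mod_less_divisor)
  show "(\<lambda>h. (h + r0) mod ?n) ` rotation_stabiliser xs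
      \<subseteq> {r \<in> {..<?n}. rotate r xs = rotate r0 xs}"
    unfolding rotation_stabiliser_def using assms
    by (auto simp only: rotate_add_mod_length) (auto intro!: mod_less_divisor)
qed (simp_all add: rotation_stabiliser_def)

lemma card_rotations_mult_card_stabiliser:
  assumes "xs \<noteq> []"
  shows "card (rotations xs) * card (rotation_stabiliser xs) = length xs"
proof -
  let ?n = "length xs"
  have "?n = (\<Sum>ys\<in>rotations xs. card {r \<in> {..<?n}. rotate r xs = ys})"
    using sum.group[of "{..<?n}" "rotations xs" "\<lambda>r. rotate r xs" "\<lambda>_. 1 :: nat"]
    by (simp add: rotations_eq_image[OF assms])
  also have "\<dots> = (\<Sum>ys\<in>rotations xs. card (rotation_stabiliser xs))"
  proof (rule sum.cong[OF refl])
    fix ys assume "ys \<in> rotations xs"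
    then obtain r0 where "r0 < ?n" "ys = rotate r0 xs"
      by (auto simp: rotations_eq_image[OF assms])
    then show "card {r \<in> {..<?n}. rotate r xs = ys} = card (rotation_stabiliser xs)"
      using card_rotation_fibre[of r0 xs] by simp
  qed
  finally show ?thesis by simp
qed

lemma card_rotation_stabiliser_le:
  assumes "t0 < length xs" "P (xs ! t0)"
  shows "card (rotation_stabiliser xs) \<le> card {t \<in> {..<length xs}. P (xs ! t)}"
proof (rule card_inj_on_le)
  let ?n = "length xs"
  show "inj_on (\<lambda>h. (h + t0) mod ?n) (rotation_stabiliser xs)"
    unfolding rotation_stabiliser_def by (auto intro: inj_on_subset[OF inj_on_add_mod])
  show "(\<lambda>h. (h + t0) mod ?n) ` rotation_stabiliser xs \<subseteq> {t \<in> {..<?n}. P (xs ! t)}"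
  proof
    fix s assume "s \<in> (\<lambda>h. (h + t0) mod ?n) ` rotation_stabiliser xs"
    then obtain h where h: "rotate h xs = xs" "s = (h + t0) mod ?n"
      unfolding rotation_stabiliser_def by auto
    have "xs ! s = rotate h xs ! t0" using h(2) assms(1) by (simp add: nth_rotate)
    moreover have "0 < ?n" using assms(1) by (cases xs) simp_all
    ultimately show "s \<in> {t \<in> {..<?n}. P (xs ! t)}" using h assms by auto
  qed
qed simp

lemma pi_power_dvd_cyclic_prod:
  assumes "xs \<in> words D n"
    and "\<And>a b. a < D \<Longrightarrow> b < D \<Longrightarrow> P a \<Longrightarrow> \<pi> dvd f a b"
  shows "\<pi> ^ card {t \<in> {..<n}. P (xs ! t)} dvd cyclic_prod f xs"
proof -
  define T where "T = {t \<in> {..<n}. P (xs ! t)}"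
  define g where "g t = f (xs ! t) (xs ! (Suc t mod n))" for t
  have len: "length xs = n" using assms(1) by (simp add: words_def)
  have "(\<Prod>t\<in>T. \<pi>) dvd prod g T"
    using assms by (intro prod_dvd_prod) (auto simp: T_def g_def nth_in_words)
  also have "prod g T dvd prod g {..<n}"
    by (rule prod_dvd_prod_subset) (auto simp: T_def)
  finally show ?thesis by (simp add: T_def g_def cyclic_prod_def len)
qed

lemma sum_rotations_cyclic_prod:
  "(\<Sum>ys\<in>rotations xs. cyclic_prod f ys) = of_nat (card (rotations xs)) * cyclic_prod f xs"
proof -
  have "(\<Sum>ys\<in>rotations xs. cyclic_prod f ys) = (\<Sum>ys\<in>rotations xs. cyclic_prod f xs)"
    by (rule sum.cong) (auto simp: rotations_def cyclic_prod_rotate)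
  then show ?thesis by simp
qed

lemma rotation_class_sum_dvd:
  fixes \<pi> :: "'a::comm_ring_1" and f :: "nat \<Rightarrow> nat \<Rightarrow> 'a"
  assumes pi_power: "\<And>c. c \<ge> 1 \<Longrightarrow> of_nat c * \<pi> dvd \<pi> ^ c"
    and marked: "\<And>a b. a < D \<Longrightarrow> b < D \<Longrightarrow> P a \<Longrightarrow> \<pi> dvd f a b"
    and xs: "xs \<in> words D n" and "x \<in> set xs" "P x"
  shows "of_nat n * \<pi> dvd (\<Sum>ys\<in>rotations xs. cyclic_prod f ys)"
proof -
  have len: "length xs = n" using xs by (simp add: words_def)
  obtain t0 where t0: "t0 < n" "P (xs ! t0)"
    using \<open>x \<in> set xs\<close> \<open>P x\<close> len by (auto simp: in_set_conv_nth)
  then have "xs \<noteq> []" using len by auto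
  have "0 \<in> rotation_stabiliser xs" "finite (rotation_stabiliser xs)"
    using t0 len by (simp_all add: rotation_stabiliser_def)
  then have "card (rotation_stabiliser xs) \<ge> 1"
    by (simp add: Suc_le_eq card_gt_0_iff) blast
  then have "of_nat (card (rotation_stabiliser xs)) * \<pi> dvd \<pi> ^ card (rotation_stabiliser xs)"
    by (rule pi_power)
  also have "\<dots> dvd \<pi> ^ card {t \<in> {..<n}. P (xs ! t)}"
    using card_rotation_stabiliser_le[of t0 xs P] t0 len by (simp add: le_imp_power_dvd)
  also have "\<dots> dvd cyclic_prod f xs"
    using xs marked by (rule pi_power_dvd_cyclic_prod)
  finally have "of_nat (card (rotations xs)) * (of_nat (card (rotation_stabiliser xs)) * \<pi>)
      dvd of_nat (card (rotations xs)) * cyclic_prod f xs"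
    by (rule mult_dvd_mono[OF dvd_refl])
  moreover have "n = card (rotations xs) * card (rotation_stabiliser xs)"
    using card_rotations_mult_card_stabiliser[OF \<open>xs \<noteq> []\<close>] len by simp
  ultimately show ?thesis by (simp add: sum_rotations_cyclic_prod mult.assoc)
qed

lemma necklace_sum_dvd:
  fixes \<pi> :: "'a::comm_ring_1" and f :: "nat \<Rightarrow> nat \<Rightarrow> 'a"
  assumes pi_power: "\<And>c. c \<ge> 1 \<Longrightarrow> of_nat c * \<pi> dvd \<pi> ^ c"
    and marked: "\<And>a b. a < D \<Longrightarrow> b < D \<Longrightarrow> P a \<Longrightarrow> \<pi> dvd f a b"
  shows "of_nat n * \<pi> dvd (\<Sum>xs | xs \<in> words D n \<and> (\<exists>x\<in>set xs. P x). cyclic_prod f xs)"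
proof -
  define Z where "Z = {xs. xs \<in> words D n \<and> (\<exists>x\<in>set xs. P x)}"
  have class_eq: "{ys \<in> Z. rotations ys = rotations xs} = rotations xs" if "xs \<in> Z" for xs
  proof -
    have "rotations xs \<subseteq> Z" using that unfolding Z_def rotations_def words_def by auto
    then show ?thesis using self_in_rotations rotations_eq_if_in_rotations by blast
  qed
  have "(\<Sum>xs\<in>Z. cyclic_prod f xs) = (\<Sum>C\<in>rotations ` Z. \<Sum>ys | ys \<in> Z \<and> rotations ys = C. cyclic_prod f ys)"
    by (rule sum.group[symmetric]) (simp_all add: Z_def)
  also have "of_nat n * \<pi> dvd \<dots>"
  proof (rule dvd_sum)
    fix C assume "C \<in> rotations ` Z"
    then obtain xs where xs: "xs \<in> Z" "C = rotations xs" by blast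
    then show "of_nat n * \<pi> dvd (\<Sum>ys | ys \<in> Z \<and> rotations ys = C. cyclic_prod f ys)"
      using rotation_class_sum_dvd[OF pi_power marked] class_eq unfolding Z_def by auto
  qed
  finally show ?thesis unfolding Z_def .
qed

lemma cyclic_prod_cong:
  assumes "xs \<in> words D n" "\<And>a b. a < D \<Longrightarrow> b < D \<Longrightarrow> f a b = g a b"
  shows "cyclic_prod f xs = cyclic_prod g xs"
  using assms unfolding cyclic_prod_def words_def by (intro prod.cong) (auto simp: subset_iff)

section \<open>Traces as sums over closed walks\<close>

definition mat_trace :: "'a::comm_ring_1 mat \<Rightarrow> 'a" where
  "mat_trace A = (\<Sum>i<dim_row A. A $$ (i, i))"

lemma index_mult_mat_sum:
  assumes "A \<in> carrier_mat a b" "B \<in> carrier_mat b c" "i < a" "j < c"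
  shows "(A * B) $$ (i, j) = (\<Sum>l<b. A $$ (i, l) * B $$ (l, j))"
  using assms by (auto simp: scalar_prod_def lessThan_atLeast0 intro!: sum.cong)

lemma mat_trace_mult_comm:
  assumes A: "A \<in> carrier_mat a b" and B: "B \<in> carrier_mat b a"
  shows "mat_trace (A * B) = mat_trace (B * A)"
proof -
  have "mat_trace (A * B) = (\<Sum>i<a. (A * B) $$ (i, i))" unfolding mat_trace_def using A by simp
  also have "\<dots> = (\<Sum>i<a. \<Sum>l<b. A $$ (i, l) * B $$ (l, i))"
    by (rule sum.cong[OF refl]) (rule index_mult_mat_sum[OF A B], auto)
  also have "\<dots> = (\<Sum>l<b. \<Sum>i<a. B $$ (l, i) * A $$ (i, l))"
    by (subst sum.swap) (simp add: mult.commute)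
  also have "\<dots> = (\<Sum>l<b. (B * A) $$ (l, l))"
    by (rule sum.cong[OF refl]) (rule index_mult_mat_sum[OF B A, symmetric], auto)
  also have "\<dots> = mat_trace (B * A)" unfolding mat_trace_def using B by simp
  finally show ?thesis .
qed

lemma pow_mat_mult:
  assumes A: "A \<in> carrier_mat d d"
  shows "(A ^\<^sub>m n) ^\<^sub>m i = A ^\<^sub>m (n * i)"
proof -
  let ?R = "ring_mat TYPE('a) d ()"
  interpret semiring ?R by (rule semiring_mat)
  have "(A ^\<^sub>m n) ^\<^sub>m i = (A ^\<^sub>m n) [^]\<^bsub>?R\<^esub> i"
    by (rule pow_mat_ring_pow[OF pow_carrier_mat[OF A]])
  also have "\<dots> = (A [^]\<^bsub>?R\<^esub> n) [^]\<^bsub>?R\<^esub> i"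
    by (simp only: pow_mat_ring_pow[OF A, where b = "()"])
  also have "\<dots> = A [^]\<^bsub>?R\<^esub> (n * i)"
    using A by (intro nat_pow_pow) (simp add: ring_mat_def)
  also have "\<dots> = A ^\<^sub>m (n * i)"
    using A by (simp add: pow_mat_ring_pow[where b = "()"])
  finally show ?thesis .
qed

lemma pow_mat_Suc_mult_comm:
  assumes R: "R \<in> carrier_mat a b" and S: "S \<in> carrier_mat b a"
  shows "(R * S) ^\<^sub>m Suc m = R * ((S * R) ^\<^sub>m m * S)"
proof (induction m)
  case 0
  show ?case using R S by simp
next
  case (Suc m)
  have SR: "S * R \<in> carrier_mat b b" using R S by simp
  have P: "(S * R) ^\<^sub>m m \<in> carrier_mat b b" using SR by simp
  have PS: "(S * R) ^\<^sub>m m * S \<in> carrier_mat b a" using P S by simp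
  have RS: "R * S \<in> carrier_mat a a" using R S by simp
  have "(R * S) ^\<^sub>m Suc (Suc m) = R * ((S * R) ^\<^sub>m m * S) * (R * S)"
    using Suc.IH by simp
  also have "\<dots> = R * ((S * R) ^\<^sub>m m * S * (R * S))"
    by (rule assoc_mult_mat[OF R PS RS])
  also have "(S * R) ^\<^sub>m m * S * (R * S) = (S * R) ^\<^sub>m m * (S * (R * S))"
    by (rule assoc_mult_mat[OF P S RS])
  also have "S * (R * S) = (S * R) * S"
    by (rule assoc_mult_mat[OF S R S, symmetric])
  also have "(S * R) ^\<^sub>m m * ((S * R) * S) = (S * R) ^\<^sub>m Suc m * S"
    using assoc_mult_mat[OF P SR S] by simp
  finally show ?case .
qed

lemma mat_trace_pow_mult_comm:
  assumes R: "R \<in> carrier_mat a b" and S: "S \<in> carrier_mat b a" and "n > 0"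
  shows "mat_trace ((R * S) ^\<^sub>m n) = mat_trace ((S * R) ^\<^sub>m n)"
proof -
  obtain m where m: "n = Suc m" using \<open>n > 0\<close> by (cases n) auto
  have SR: "S * R \<in> carrier_mat b b" using R S by simp
  have P: "(S * R) ^\<^sub>m m \<in> carrier_mat b b" using SR by simp
  have PS: "(S * R) ^\<^sub>m m * S \<in> carrier_mat b a" using P S by simp
  have "mat_trace ((R * S) ^\<^sub>m n) = mat_trace (((S * R) ^\<^sub>m m * S) * R)"
    unfolding m pow_mat_Suc_mult_comm[OF R S] by (rule mat_trace_mult_comm[OF R PS])
  also have "((S * R) ^\<^sub>m m * S) * R = (S * R) ^\<^sub>m n"
    using assoc_mult_mat[OF P S R] by (simp add: m)
  finally show ?thesis .
qed

lemma pow_mat_Suc_index: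
  fixes A :: "'a::comm_ring_1 mat"
  assumes A: "A \<in> carrier_mat D D" and i: "i < D" and j: "j < D"
  shows "(A ^\<^sub>m Suc m) $$ (i, j) = (\<Sum>ks\<in>words D m. \<Prod>t\<le>m. A $$ ((i # ks) ! t, (ks @ [j]) ! t))"
  using j
proof (induction m arbitrary: j)
  case 0
  have "words D 0 = {[]}" unfolding words_def by auto
  then show ?case using A i 0 by simp
next
  case (Suc m)
  have "(A ^\<^sub>m Suc (Suc m)) $$ (i, j) = (\<Sum>k<D. (A ^\<^sub>m Suc m) $$ (i, k) * A $$ (k, j))"
    unfolding pow_mat.simps(2)[of A "Suc m"]
    by (rule index_mult_mat_sum[OF pow_carrier_mat[OF A] A i Suc.prems])
  also have "\<dots> = (\<Sum>k<D. \<Sum>ks\<in>words D m. (\<Prod>t\<le>m. A $$ ((i # ks) ! t, (ks @ [k]) ! t)) * A $$ (k, j))"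
    by (rule sum.cong[OF refl]) (simp only: Suc.IH lessThan_iff sum_distrib_right)
  also have "\<dots> = (\<Sum>(ks, k)\<in>words D m \<times> {..<D}. (\<Prod>t\<le>m. A $$ ((i # ks) ! t, (ks @ [k]) ! t)) * A $$ (k, j))"
    by (subst sum.swap) (simp add: sum.cartesian_product)
  also have "\<dots> = (\<Sum>(ks, k)\<in>words D m \<times> {..<D}. \<Prod>t\<le>Suc m. A $$ ((i # ks @ [k]) ! t, (ks @ [k] @ [j]) ! t))"
  proof (rule sum.cong[OF refl], clarify)
    fix ks k assume "ks \<in> words D m"
    then have len: "length ks = m" by (simp add: words_def)
    have "(\<Prod>t\<le>m. A $$ ((i # ks @ [k]) ! t, (ks @ [k] @ [j]) ! t)) = (\<Prod>t\<le>m. A $$ ((i # ks) ! t, (ks @ [k]) ! t))"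
      using len by (intro prod.cong) (auto simp: nth_append nth_Cons split: nat.split)
    then show "(\<Prod>t\<le>m. A $$ ((i # ks) ! t, (ks @ [k]) ! t)) * A $$ (k, j)
       = (\<Prod>t\<le>Suc m. A $$ ((i # ks @ [k]) ! t, (ks @ [k] @ [j]) ! t))"
      using len by (simp add: nth_append)
  qed
  also have "\<dots> = (\<Sum>ks\<in>words D (Suc m). \<Prod>t\<le>Suc m. A $$ ((i # ks) ! t, (ks @ [j]) ! t))"
    unfolding words_Suc_snoc by (subst sum.reindex) (auto simp: inj_on_def case_prod_beta)
  finally show ?case .
qed

lemma mat_trace_pow_eq_sum_cyclic_prod:
  fixes A :: "'a::comm_ring_1 mat"
  assumes A: "A \<in> carrier_mat D D" and "n > 0"
  shows "mat_trace (A ^\<^sub>m n) = (\<Sum>xs\<in>words D n. cyclic_prod (\<lambda>a b. A $$ (a, b)) xs)"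
proof -
  obtain m where m: "n = Suc m" using \<open>n > 0\<close> by (cases n) auto
  have "mat_trace (A ^\<^sub>m n) = (\<Sum>i<D. (A ^\<^sub>m Suc m) $$ (i, i))"
    unfolding mat_trace_def m using A by simp
  also have "\<dots> = (\<Sum>(ks, i)\<in>words D m \<times> {..<D}. \<Prod>t\<le>m. A $$ ((i # ks) ! t, (ks @ [i]) ! t))"
    using A
    by (simp add: pow_mat_Suc_index del: pow_mat.simps) (subst sum.swap, simp add: sum.cartesian_product)
  also have "\<dots> = (\<Sum>(ks, i)\<in>words D m \<times> {..<D}. cyclic_prod (\<lambda>a b. A $$ (a, b)) (i # ks))"
  proof (rule sum.cong[OF refl], clarify)
    fix ks i assume "ks \<in> words D m"
    then have len: "length ks = m" by (simp add: words_def)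
    show "(\<Prod>t\<le>m. A $$ ((i # ks) ! t, (ks @ [i]) ! t)) = cyclic_prod (\<lambda>a b. A $$ (a, b)) (i # ks)"
      unfolding cyclic_prod_def using len
      by (intro prod.cong) (auto simp: nth_append nth_Cons' less_Suc_eq_le)
  qed
  also have "\<dots> = (\<Sum>xs\<in>words D n. cyclic_prod (\<lambda>a b. A $$ (a, b)) xs)"
    unfolding m words_Suc_Cons by (subst sum.reindex) (auto simp: inj_on_def case_prod_beta)
  finally show ?thesis .
qed

definition stacked_mat :: "nat \<Rightarrow> 'a::comm_ring_1 mat \<Rightarrow> 'a mat \<Rightarrow> 'a mat" where
  "stacked_mat d M N =
     mat (2 * d) d (\<lambda>(a, k). if a < d then N $$ (a, k) else M $$ (a - d, k) - N $$ (a - d, k))"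

definition doubled_one_mat :: "nat \<Rightarrow> 'a::comm_ring_1 mat" where
  "doubled_one_mat d = mat d (2 * d) (\<lambda>(k, b). if b = k \<or> b = k + d then 1 else 0)"

lemma stacked_mat_carrier [simp]: "stacked_mat d M N \<in> carrier_mat (2 * d) d"
  by (simp add: stacked_mat_def)

lemma doubled_one_mat_carrier [simp]: "doubled_one_mat d \<in> carrier_mat d (2 * d)"
  by (simp add: doubled_one_mat_def)

lemma doubled_one_mult_stacked_mat:
  assumes M: "M \<in> carrier_mat d d"
  shows "doubled_one_mat d * stacked_mat d M N = M"
proof (rule eq_matI)
  fix k j assume "k < dim_row M" "j < dim_col M"
  then have kj: "k < d" "j < d" using M by auto
  have "(doubled_one_mat d * stacked_mat d M N) $$ (k, j)
      = (\<Sum>a<2 * d. doubled_one_mat d $$ (k, a) * stacked_mat d M N $$ (a, j))"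
    by (rule index_mult_mat_sum[OF _ _ kj]) simp_all
  also have "\<dots> = (\<Sum>a<2 * d. (if a = k then stacked_mat d M N $$ (a, j) else 0)
      + (if a = k + d then stacked_mat d M N $$ (a, j) else 0))"
    using kj by (intro sum.cong) (auto simp: doubled_one_mat_def)
  also have "\<dots> = M $$ (k, j)"
    using kj by (simp add: sum.distrib stacked_mat_def)
  finally show "(doubled_one_mat d * stacked_mat d M N) $$ (k, j) = M $$ (k, j)" .
qed (use M in \<open>auto simp: doubled_one_mat_def stacked_mat_def\<close>)

lemma stacked_mult_doubled_one_index:
  assumes ab: "a < 2 * d" "b < 2 * d"
  shows "(stacked_mat d M N * doubled_one_mat d) $$ (a, b) = stacked_mat d M N $$ (a, b mod d)"
proof -
  have "k = b mod d \<longleftrightarrow> b = k \<or> b = k + d" if "k < d" for k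
    using ab that by (auto simp: mod_if)
  then have "(stacked_mat d M N * doubled_one_mat d) $$ (a, b)
      = (\<Sum>k<d. if k = b mod d then stacked_mat d M N $$ (a, k) else 0)"
    using ab by (subst index_mult_mat_sum[of _ "2 * d" d]) (auto simp: doubled_one_mat_def intro!: sum.cong)
  also have "\<dots> = stacked_mat d M N $$ (a, b mod d)"
    using ab by simp
  finally show ?thesis .
qed

lemma sum_words_double:
  "(\<Sum>xs\<in>words (2 * d) n. g xs)
    = (\<Sum>xs\<in>words d n. g xs) + (\<Sum>xs | xs \<in> words (2 * d) n \<and> (\<exists>x\<in>set xs. d \<le> x). g xs)"
proof -
  have split: "words (2 * d) n = words d n \<union> {xs. xs \<in> words (2 * d) n \<and> (\<exists>x\<in>set xs. d \<le> x)}"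
    by (auto simp: words_def subset_iff not_less)
  have "words d n \<inter> {xs. xs \<in> words (2 * d) n \<and> (\<exists>x\<in>set xs. d \<le> x)} = {}"
    by (auto simp: words_def subset_iff)
  then show ?thesis by (subst split) (rule sum.union_disjoint; simp)
qed

text \<open>With \<open>M = N + E\<close> and \<open>E \<equiv> 0 (mod \<pi>)\<close>, factor \<open>M = S R\<close> through \<open>2 d\<close> dimensions with
  \<open>R = [N; E]\<close> and \<open>S = [1 1]\<close>: closed walks of \<open>R S\<close> staying in the first \<open>d\<close> letters are the
  closed walks of \<open>N\<close>, and every other walk takes an \<open>E\<close>-step.\<close>
lemma mat_trace_pow_cong:
  fixes \<pi> :: "'a::comm_ring_1"
  assumes pi_power: "\<And>c. c \<ge> 1 \<Longrightarrow> of_nat c * \<pi> dvd \<pi> ^ c"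
    and M: "M \<in> carrier_mat d d" and N: "N \<in> carrier_mat d d"
    and cong: "\<And>i j. i < d \<Longrightarrow> j < d \<Longrightarrow> \<pi> dvd M $$ (i, j) - N $$ (i, j)"
  shows "of_nat n * \<pi> dvd mat_trace (M ^\<^sub>m n) - mat_trace (N ^\<^sub>m n)"
proof (cases "n = 0")
  case True
  then show ?thesis using M N by simp
next
  case False
  let ?RS = "stacked_mat d M N * doubled_one_mat d"
  let ?marked = "{xs. xs \<in> words (2 * d) n \<and> (\<exists>x\<in>set xs. d \<le> x)}"
  have "mat_trace (M ^\<^sub>m n) = mat_trace (?RS ^\<^sub>m n)"
    using mat_trace_pow_mult_comm[OF stacked_mat_carrier[of d M N] doubled_one_mat_carrier[of d]]
      False doubled_one_mult_stacked_mat[OF M] by simp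
  also have "\<dots> = (\<Sum>xs\<in>words (2 * d) n. cyclic_prod (\<lambda>a b. ?RS $$ (a, b)) xs)"
    using False
    by (intro mat_trace_pow_eq_sum_cyclic_prod mult_carrier_mat[OF stacked_mat_carrier doubled_one_mat_carrier])
      simp
  also have "\<dots> = mat_trace (N ^\<^sub>m n) + (\<Sum>xs\<in>?marked. cyclic_prod (\<lambda>a b. ?RS $$ (a, b)) xs)"
  proof -
    have "cyclic_prod (\<lambda>a b. ?RS $$ (a, b)) xs = cyclic_prod (\<lambda>a b. N $$ (a, b)) xs"
      if "xs \<in> words d n" for xs
      using that by (rule cyclic_prod_cong) (subst stacked_mult_doubled_one_index; simp add: stacked_mat_def)
    then show ?thesis
      using mat_trace_pow_eq_sum_cyclic_prod[OF N] False by (simp add: sum_words_double)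
  qed
  finally have "mat_trace (M ^\<^sub>m n) - mat_trace (N ^\<^sub>m n)
      = (\<Sum>xs\<in>?marked. cyclic_prod (\<lambda>a b. ?RS $$ (a, b)) xs)"
    by simp
  also have "of_nat n * \<pi> dvd \<dots>"
  proof (rule necklace_sum_dvd)
    show "of_nat c * \<pi> dvd \<pi> ^ c" if "c \<ge> 1" for c
      using that by (rule pi_power)
    fix a b assume "a < 2 * d" "b < 2 * d" "d \<le> a"
    then show "\<pi> dvd ?RS $$ (a, b)"
      by (subst stacked_mult_doubled_one_index) (simp_all add: stacked_mat_def cong)
  qed
  finally show ?thesis .
qed

section \<open>Newton's identities\<close>

lemma const_poly_comm_ring_hom: "comm_ring_hom (\<lambda>a::'a::comm_ring_1. [:a:])"
  by unfold_locales (auto simp: one_pCons)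

lemma adj_char_poly_matrix_carrier:
  "X \<in> carrier_mat d d \<Longrightarrow> adj_mat (char_poly_matrix X) \<in> carrier_mat d d"
  by (rule adj_mat(1)[OF char_poly_matrix_closed])

lemma adj_char_poly_matrix_index:
  fixes X :: "'a::comm_ring_1 mat"
  assumes X: "X \<in> carrier_mat d d" and ij: "i < d" "j < d"
  defines "Adj \<equiv> adj_mat (char_poly_matrix X)"
  shows "[:0, 1:] * Adj $$ (i, j)
    = (if i = j then char_poly X else 0) + (map_mat (\<lambda>a. [:a:]) X * Adj) $$ (i, j)"
proof -
  define Lam where "Lam = char_poly_matrix X"
  have Lam: "Lam \<in> carrier_mat d d" and Adj: "Adj \<in> carrier_mat d d"
    using X adj_char_poly_matrix_carrier by (simp_all add: Lam_def Adj_def)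
  have Xp: "map_mat (\<lambda>a. [:a:]) X \<in> carrier_mat d d" using X by simp
  have "(Lam * Adj) $$ (i, j) = (\<Sum>l<d. Lam $$ (i, l) * Adj $$ (l, j))"
    by (rule index_mult_mat_sum[OF Lam Adj ij])
  also have "\<dots> = (\<Sum>l<d. (if i = l then [:0, 1:] * Adj $$ (l, j) else 0) - [:X $$ (i, l):] * Adj $$ (l, j))"
    using ij X by (intro sum.cong) (auto simp: Lam_def char_poly_matrix_def algebra_simps)
  also have "\<dots> = [:0, 1:] * Adj $$ (i, j) - (map_mat (\<lambda>a. [:a:]) X * Adj) $$ (i, j)"
    using ij X by (simp add: sum_subtractf index_mult_mat_sum[OF Xp Adj ij])
  finally have "(Lam * Adj) $$ (i, j) = [:0, 1:] * Adj $$ (i, j) - (map_mat (\<lambda>a. [:a:]) X * Adj) $$ (i, j)" .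
  moreover have "(Lam * Adj) $$ (i, j) = (if i = j then char_poly X else 0)"
    using ij adj_mat(2)[OF Lam] by (simp add: Lam_def Adj_def char_poly_def)
  ultimately show ?thesis by (simp add: eq_diff_eq)
qed

text \<open>The polynomial \<open>tr (X\<^sup>k adj (t - X)) = \<chi>(t) \<Sum>\<^sub>j tr (X\<^sup>k\<^sup>+\<^sup>j) t\<^sup>-\<^sup>j\<^sup>-\<^sup>1\<close>, whose
  coefficients produce Newton's identities.\<close>
definition adj_power_trace :: "'a::comm_ring_1 mat \<Rightarrow> nat \<Rightarrow> 'a poly" where
  "adj_power_trace X k = mat_trace (map_mat (\<lambda>a. [:a:]) X ^\<^sub>m k * adj_mat (char_poly_matrix X))"

lemma adj_power_trace_eq_sum:
  assumes X: "X \<in> carrier_mat d d"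
  shows "adj_power_trace X k
    = (\<Sum>i<d. \<Sum>l<d. [:(X ^\<^sub>m k) $$ (i, l):] * adj_mat (char_poly_matrix X) $$ (l, i))"
proof -
  interpret const: comm_ring_hom "\<lambda>a::'a. [:a:]" by (rule const_poly_comm_ring_hom)
  have Adj: "adj_mat (char_poly_matrix X) \<in> carrier_mat d d"
    using X by (rule adj_char_poly_matrix_carrier)
  have Xpk: "map_mat (\<lambda>a. [:a:]) X ^\<^sub>m k = map_mat (\<lambda>a. [:a:]) (X ^\<^sub>m k)"
    using const.mat_hom_pow[OF X] by simp
  have P: "map_mat (\<lambda>a. [:a:]) (X ^\<^sub>m k) \<in> carrier_mat d d" using X by simp
  show ?thesis
    unfolding adj_power_trace_def mat_trace_def Xpk using X
    by (auto simp: index_mult_mat_sum[OF P Adj] intro!: sum.cong)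
qed

lemma adj_power_trace_Suc:
  fixes X :: "'a::comm_ring_1 mat"
  assumes X: "X \<in> carrier_mat d d"
  shows "[:0, 1:] * adj_power_trace X k
    = char_poly X * [:mat_trace (X ^\<^sub>m k):] + adj_power_trace X (Suc k)"
proof -
  interpret const: comm_ring_hom "\<lambda>a::'a. [:a:]" by (rule const_poly_comm_ring_hom)
  define Adj where "Adj = adj_mat (char_poly_matrix X)"
  define Xp where "Xp = map_mat (\<lambda>a. [:a:]) X"
  have Adj: "Adj \<in> carrier_mat d d" and Xp: "Xp \<in> carrier_mat d d"
    using X adj_char_poly_matrix_carrier by (simp_all add: Adj_def Xp_def)
  have P: "Xp ^\<^sub>m k \<in> carrier_mat d d" and XA: "Xp * Adj \<in> carrier_mat d d"
    using Xp Adj by simp_all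
  have "Xp ^\<^sub>m k = map_mat (\<lambda>a. [:a:]) (X ^\<^sub>m k)"
    unfolding Xp_def using const.mat_hom_pow[OF X] by simp
  then have Xpk: "(Xp ^\<^sub>m k) $$ (i, l) = [:(X ^\<^sub>m k) $$ (i, l):]" if "i < d" "l < d" for i l
    using X that by simp
  have "[:0, 1:] * adj_power_trace X k
      = (\<Sum>i<d. \<Sum>l<d. (Xp ^\<^sub>m k) $$ (i, l) * ([:0, 1:] * Adj $$ (l, i)))"
    unfolding adj_power_trace_eq_sum[OF X] Adj_def sum_distrib_left
    by (intro sum.cong refl) (simp add: Xpk mult_ac)
  also have "\<dots> = (\<Sum>i<d. \<Sum>l<d. (Xp ^\<^sub>m k) $$ (i, l) * (if l = i then char_poly X else 0)
      + (Xp ^\<^sub>m k) $$ (i, l) * (Xp * Adj) $$ (l, i))"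
    by (intro sum.cong refl)
      (simp only: adj_char_poly_matrix_index[OF X] lessThan_iff Adj_def Xp_def distrib_left)
  also have "\<dots> = (\<Sum>i<d. (Xp ^\<^sub>m k) $$ (i, i) * char_poly X)
      + (\<Sum>i<d. \<Sum>l<d. (Xp ^\<^sub>m k) $$ (i, l) * (Xp * Adj) $$ (l, i))"
    by (simp add: sum.distrib if_distrib[of "\<lambda>x. _ * x"] sum.delta' cong: if_cong)
  also have "(\<Sum>i<d. (Xp ^\<^sub>m k) $$ (i, i) * char_poly X) = char_poly X * [:mat_trace (X ^\<^sub>m k):]"
    using X const.hom_sum[of "\<lambda>i. (X ^\<^sub>m k) $$ (i, i)" "{..<d}"]
    by (simp add: Xpk mat_trace_def mult.commute sum_distrib_left)
  also have "(\<Sum>i<d. \<Sum>l<d. (Xp ^\<^sub>m k) $$ (i, l) * (Xp * Adj) $$ (l, i)) = adj_power_trace X (Suc k)"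
  proof -
    have "Xp ^\<^sub>m k * (Xp * Adj) = Xp ^\<^sub>m Suc k * Adj"
      using assoc_mult_mat[OF P Xp Adj] by simp
    then have "(\<Sum>l<d. (Xp ^\<^sub>m k) $$ (i, l) * (Xp * Adj) $$ (l, i)) = (Xp ^\<^sub>m Suc k * Adj) $$ (i, i)"
      if "i < d" for i
      using index_mult_mat_sum[OF P XA that that] by simp
    then show ?thesis
      unfolding adj_power_trace_def mat_trace_def Xp_def[symmetric] Adj_def[symmetric] using Xp
      by (intro sum.cong) auto
  qed
  finally show ?thesis .
qed

lemma adj_power_trace_0: "X \<in> carrier_mat d d \<Longrightarrow> adj_power_trace (X :: 'a::idom mat) 0 = pderiv (char_poly X)"
proof -
  assume X: "X \<in> carrier_mat d d"
  have Lam: "char_poly_matrix X \<in> carrier_mat d d" using X by simp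
  have "adj_power_trace X 0 = (\<Sum>i<d. adj_mat (char_poly_matrix X) $$ (i, i))"
    unfolding adj_power_trace_def mat_trace_def using X adj_mat(1)[OF Lam] by simp
  also have "\<dots> = (\<Sum>i<d. char_poly (mat_delete X i i))"
  proof (rule sum.cong[OF refl])
    fix i assume "i \<in> {..<d}"
    then have "mat_delete (char_poly_matrix X) i i = char_poly_matrix (mat_delete X i i)"
      using X by (intro eq_matI) (auto simp: char_poly_matrix_def mat_delete_def)
    then show "adj_mat (char_poly_matrix X) $$ (i, i) = char_poly (mat_delete X i i)"
      using \<open>i \<in> {..<d}\<close> Lam by (simp add: adj_mat_def cofactor_def char_poly_def)
  qed
  also have "\<dots> = pderiv (char_poly X)" by (rule pderiv_char_poly[OF X, symmetric])
  finally show ?thesis .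
qed

lemma coeff_adj_power_trace_eq_0:
  assumes X: "X \<in> carrier_mat d d"
  shows "\<exists>B. \<forall>k j. B < j \<longrightarrow> coeff (adj_power_trace X k) j = 0"
proof (intro exI allI impI)
  define B where "B = (\<Sum>l<d. \<Sum>i<d. degree (adj_mat (char_poly_matrix X) $$ (l, i)))"
  fix k j assume "B < j"
  have "coeff (adj_mat (char_poly_matrix X) $$ (l, i)) j = 0" if "l < d" "i < d" for l i
  proof (rule coeff_eq_0)
    have "degree (adj_mat (char_poly_matrix X) $$ (l, i)) \<le> (\<Sum>i<d. degree (adj_mat (char_poly_matrix X) $$ (l, i)))"
      using that by (intro member_le_sum) auto
    also have "\<dots> \<le> B" unfolding B_def using that by (intro member_le_sum) auto
    finally show "degree (adj_mat (char_poly_matrix X) $$ (l, i)) < j" using \<open>B < j\<close> by simp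
  qed
  then show "coeff (adj_power_trace X k) j = 0"
    by (simp add: adj_power_trace_eq_sum[OF X] coeff_sum)
qed

lemma coeff_char_poly_eq_0: "X \<in> carrier_mat d d \<Longrightarrow> d < i \<Longrightarrow> coeff (char_poly X) i = 0"
  using degree_monic_char_poly[of X d] by (simp add: coeff_eq_0)

lemma shift_recurrence_unfold:
  fixes \<tau> :: "nat \<Rightarrow> nat \<Rightarrow> 'a::comm_semiring_1"
  assumes rec: "\<And>k i. \<tau> k i = c (Suc i) * p k + \<tau> (Suc k) (Suc i)"
  shows "\<tau> k i = (\<Sum>r<s. c (Suc i + r) * p (k + r)) + \<tau> (k + s) (i + s)"
proof (induction s arbitrary: k i)
  case (Suc s)
  show ?case
    using rec[of k i] Suc.IH[of "Suc k" "Suc i"]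
    by (simp add: sum.lessThan_Suc_shift add.assoc del: sum.lessThan_Suc)
qed simp

lemma char_poly_newton_sum:
  fixes X :: "'a::idom mat"
  assumes X: "X \<in> carrier_mat d d"
  shows "of_nat j * coeff (char_poly X) j = (\<Sum>r\<le>d. coeff (char_poly X) (j + r) * mat_trace (X ^\<^sub>m r))"
proof -
  define c where "c i = coeff (char_poly X) i" for i
  define pw where "pw k = mat_trace (X ^\<^sub>m k)" for k
  define \<tau> where "\<tau> k i = coeff (adj_power_trace X k) i" for k i
  have truncate: "(\<Sum>r<s. c (i + r) * g r) = (\<Sum>r\<le>d. c (i + r) * g r)" if "d < s" for i s g
    using that by (intro sum.mono_neutral_right) (auto simp: c_def coeff_char_poly_eq_0[OF X])
  have rec_Suc: "\<tau> k i = c (Suc i) * pw k + \<tau> (Suc k) (Suc i)" for k i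
    using arg_cong[OF adj_power_trace_Suc[OF X, of k], of "\<lambda>q. coeff q (Suc i)"]
    by (simp add: \<tau>_def c_def pw_def)
  have rec_0: "c 0 * pw k + \<tau> (Suc k) 0 = 0" for k
    using arg_cong[OF adj_power_trace_Suc[OF X, of k], of "\<lambda>q. coeff q 0"]
    by (simp add: \<tau>_def c_def pw_def mult.commute)
  note telescope = shift_recurrence_unfold[of \<tau> c pw, OF rec_Suc]
  obtain B where B: "\<And>k i. B < i \<Longrightarrow> \<tau> k i = 0"
    using coeff_adj_power_trace_eq_0[OF X] unfolding \<tau>_def by blast
  define s where "s = Suc (B + d)"
  show ?thesis
  proof (cases j)
    case 0
    have "\<tau> 1 0 = (\<Sum>r<s. c (Suc r) * pw (Suc r))"
      using telescope[of 1 0 s] B[of s] by (simp add: s_def)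
    then have "(\<Sum>r<Suc s. c (0 + r) * pw r) = 0"
      using rec_0[of 0] by (simp add: sum.lessThan_Suc_shift del: sum.lessThan_Suc)
    moreover have "(\<Sum>r<Suc s. c (0 + r) * pw r) = (\<Sum>r\<le>d. c (0 + r) * pw r)"
      by (rule truncate) (simp add: s_def)
    ultimately have "(\<Sum>r\<le>d. c (0 + r) * pw r) = 0" by metis
    then show ?thesis using 0 by (simp add: c_def pw_def)
  next
    case (Suc i)
    have "of_nat j * c j = \<tau> 0 i"
      using adj_power_trace_0[OF X] Suc by (simp add: \<tau>_def c_def coeff_pderiv)
    also have "\<dots> = (\<Sum>r<s. c (j + r) * pw r)"
      using telescope[of 0 i s] B[of "i + s"] Suc by (simp add: s_def)
    also have "\<dots> = (\<Sum>r\<le>d. c (j + r) * pw r)"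
      by (rule truncate) (simp add: s_def)
    finally show ?thesis by (simp add: c_def pw_def)
  qed
qed

definition newton_identities :: "nat \<Rightarrow> (nat \<Rightarrow> 'a::comm_ring_1) \<Rightarrow> (nat \<Rightarrow> 'a) \<Rightarrow> bool" where
  "newton_identities d a u \<longleftrightarrow>
     (\<forall>m. 1 \<le> m \<longrightarrow> m \<le> d \<longrightarrow> of_nat m * a m + (\<Sum>l<m. a l * u (m - l)) = 0)"

lemma newton_identities_char_poly:
  fixes X :: "'a::idom mat"
  assumes X: "X \<in> carrier_mat d d"
  shows "newton_identities d (\<lambda>l. coeff (char_poly X) (d - l)) (\<lambda>i. mat_trace (X ^\<^sub>m i))"
  unfolding newton_identities_def
proof (intro allI impI)
  fix m assume m: "1 \<le> m" "m \<le> d"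
  define c where "c i = coeff (char_poly X) i" for i
  define pw where "pw k = mat_trace (X ^\<^sub>m k)" for k
  have "c i = 0" if "d < i" for i
    using that by (simp add: c_def coeff_char_poly_eq_0[OF X])
  then have "(\<Sum>r\<le>d. c (d - m + r) * pw r) = (\<Sum>r<Suc m. c (d - m + r) * pw r)"
    using m by (intro sum.mono_neutral_right) auto
  also have "\<dots> = c (d - m) * pw 0 + (\<Sum>r<m. c (d - m + Suc r) * pw (Suc r))"
    by (simp add: sum.lessThan_Suc_shift del: sum.lessThan_Suc)
  also have "(\<Sum>r<m. c (d - m + Suc r) * pw (Suc r)) = (\<Sum>l<m. c (d - l) * pw (m - l))"
  proof -
    have "(\<Sum>l<m. c (d - l) * pw (m - l)) = (\<Sum>l<m. c (d - m + Suc (m - Suc l)) * pw (Suc (m - Suc l)))"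
      using m by (intro sum.cong) (simp_all add: Suc_diff_Suc)
    then show ?thesis
      using sum.nat_diff_reindex[of "\<lambda>r. c (d - m + Suc r) * pw (Suc r)" m] by simp
  qed
  also have "pw 0 = of_nat d" using X by (simp add: pw_def mat_trace_def)
  finally have "of_nat (d - m) * c (d - m) = c (d - m) * of_nat d + (\<Sum>l<m. c (d - l) * pw (m - l))"
    using char_poly_newton_sum[OF X, of "d - m"] by (simp add: c_def pw_def)
  moreover have "of_nat (d - m) = (of_nat d - of_nat m :: 'a)" using m by (simp add: of_nat_diff)
  ultimately show "of_nat m * coeff (char_poly X) (d - m)
      + (\<Sum>l<m. coeff (char_poly X) (d - l) * mat_trace (X ^\<^sub>m (m - l))) = 0"
    by (simp add: c_def pw_def algebra_simps)
qed

section \<open>Integrating Newton's identities\<close>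

lemma newton_identities_fps:
  "newton_identities d a u \<longleftrightarrow>
     (\<forall>j\<le>d. fps_nth (fps_X * fps_deriv (Abs_fps a) + Abs_fps a * Abs_fps (\<lambda>i. if i = 0 then 0 else u i)) j = 0)"
proof -
  have "fps_nth (fps_X * fps_deriv (Abs_fps a) + Abs_fps a * Abs_fps (\<lambda>i. if i = 0 then 0 else u i)) j
      = of_nat j * a j + (\<Sum>l<j. a l * u (j - l))" for j
  proof -
    have "fps_nth (Abs_fps a * Abs_fps (\<lambda>i. if i = 0 then 0 else u i)) j
        = (\<Sum>l<Suc j. a l * (if j - l = 0 then 0 else u (j - l)))"
      by (simp add: fps_mult_nth atLeast0AtMost lessThan_Suc_atMost)
    also have "\<dots> = (\<Sum>l<j. a l * u (j - l))"
      by (simp add: sum.lessThan_Suc del: sum.lessThan_Suc_shift)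
    finally show ?thesis by (cases j) simp_all
  qed
  moreover have "newton_identities d a u \<longleftrightarrow> (\<forall>j\<le>d. of_nat j * a j + (\<Sum>l<j. a l * u (j - l)) = 0)"
    unfolding newton_identities_def
  proof (intro iffI allI impI)
    fix j assume hyp: "\<forall>m. 1 \<le> m \<longrightarrow> m \<le> d \<longrightarrow> of_nat m * a m + (\<Sum>l<m. a l * u (m - l)) = 0"
      and "j \<le> d"
    then show "of_nat j * a j + (\<Sum>l<j. a l * u (j - l)) = 0"
      using hyp[rule_format, of j] by (cases "j = 0") simp_all
  qed simp
  ultimately show ?thesis by simp
qed

lemma newton_identities_unique:
  fixes a b u :: "nat \<Rightarrow> 'a::idom"
  assumes inj: "inj (of_nat :: nat \<Rightarrow> 'a)"
    and a: "newton_identities d a u" and b: "newton_identities d b u" and "a 0 = b 0"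
  shows "m \<le> d \<Longrightarrow> a m = b m"
proof (induction m rule: less_induct)
  case (less m)
  show ?case
  proof (cases "m = 0")
    case False
    have "(\<Sum>l<m. a l * u (m - l)) = (\<Sum>l<m. b l * u (m - l))"
      using less by (intro sum.cong) auto
    moreover have "of_nat m * a m + (\<Sum>l<m. a l * u (m - l)) = 0"
      "of_nat m * b m + (\<Sum>l<m. b l * u (m - l)) = 0"
      using a b less.prems False by (simp_all add: newton_identities_def)
    ultimately have "of_nat m * a m = of_nat m * b m" by (metis add_right_cancel)
    moreover have "(of_nat m :: 'a) \<noteq> 0" using inj False by (metis injD of_nat_0)
    ultimately show ?thesis by (metis mult_left_cancel)
  qed (use \<open>a 0 = b 0\<close> in simp)
qed

definition fps_cong_one :: "'a::comm_ring_1 \<Rightarrow> 'a fps \<Rightarrow> bool" where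
  "fps_cong_one c f \<longleftrightarrow> fps_nth f 0 = 1 \<and> (\<forall>n\<ge>1. c dvd fps_nth f n)"

lemma fps_cong_one_mult:
  assumes "fps_cong_one c f" "fps_cong_one c g"
  shows "fps_cong_one c (f * g)"
  unfolding fps_cong_one_def
proof (intro conjI allI impI)
  show "fps_nth (f * g) 0 = 1" using assms by (simp add: fps_cong_one_def)
  fix n :: nat assume "n \<ge> 1"
  then have "c dvd fps_nth f i * fps_nth g (n - i)" if "i \<le> n" for i
    using assms that by (cases "i = 0") (auto simp: fps_cong_one_def)
  then show "c dvd fps_nth (f * g) n" by (auto simp: fps_mult_nth intro!: dvd_sum)
qed

lemma fps_cong_one_sum_dvd:
  assumes "fps_cong_one c g"
  shows "c dvd fps_nth (f * g) m - fps_nth f m"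
proof -
  have "fps_nth (f * g) m = fps_nth f m + (\<Sum>l<m. fps_nth f l * fps_nth g (m - l))"
    using assms by (simp add: fps_mult_nth atLeast0AtMost fps_cong_one_def flip: lessThan_Suc_atMost)
  moreover have "c dvd (\<Sum>l<m. fps_nth f l * fps_nth g (m - l))"
    using assms by (auto simp: fps_cong_one_def intro!: dvd_sum)
  ultimately show ?thesis by simp
qed

lemma fps_nth_mult_eq_0:
  fixes f h :: "'a::comm_ring_1 fps"
  assumes "\<And>i. i \<le> j \<Longrightarrow> fps_nth h i = 0"
  shows "fps_nth (f * h) j = 0"
  using assms by (auto simp: fps_mult_nth intro!: sum.neutral)

lemma newton_identities_mult:
  assumes a: "newton_identities d a u"
    and G: "fps_X * fps_deriv G = G * W" and W0: "fps_nth W 0 = 0"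
    and uv: "\<And>i. 1 \<le> i \<Longrightarrow> i \<le> d \<Longrightarrow> u i = v i + fps_nth W i"
  shows "newton_identities d (fps_nth (Abs_fps a * G)) v"
proof -
  define A where "A = Abs_fps a"
  define U where "U = Abs_fps (\<lambda>i. if i = 0 then 0 else u i)"
  define V where "V = Abs_fps (\<lambda>i. if i = 0 then 0 else v i)"
  have "fps_X * fps_deriv (A * G) = G * (fps_X * fps_deriv A) + A * (fps_X * fps_deriv G)"
    by (simp add: algebra_simps)
  then have split: "fps_X * fps_deriv (A * G) + A * G * V
      = G * (fps_X * fps_deriv A + A * U) + A * G * (W + V - U)"
    by (simp add: G algebra_simps)
  have A: "fps_nth (fps_X * fps_deriv A + A * U) j = 0" if "j \<le> d" for j
    using a that unfolding newton_identities_fps A_def U_def by blast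
  have W: "fps_nth (W + V - U) j = 0" if "j \<le> d" for j
    using uv[of j] W0 that by (cases "j = 0") (auto simp: U_def V_def)
  have "fps_nth (G * (fps_X * fps_deriv A + A * U)) j = 0" "fps_nth (A * G * (W + V - U)) j = 0"
    if "j \<le> d" for j
    by (rule fps_nth_mult_eq_0; use A W that in auto)+
  then show ?thesis
    unfolding newton_identities_fps fps_nth_inverse A_def[symmetric] V_def[symmetric] split
    by simp
qed

lemma divided_power_seq_exists:
  fixes c w :: "'a::idom"
  assumes inj: "inj (of_nat :: nat \<Rightarrow> 'a)"
    and divided: "\<And>m. 1 \<le> m \<Longrightarrow> of_nat (fact m) * c dvd w ^ m"
  obtains q where "q 0 = 1" "\<And>m. of_nat (Suc m) * q (Suc m) = w * q m" "\<And>m. 1 \<le> m \<Longrightarrow> c dvd q m"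
proof -
  have "\<exists>q. of_nat (fact m) * q = w ^ m \<and> (1 \<le> m \<longrightarrow> c dvd q)" for m
  proof (cases "m = 0")
    case False
    then obtain r where "w ^ m = of_nat (fact m) * c * r" using divided[of m] by (auto elim: dvdE)
    then show ?thesis by (intro exI[of _ "c * r"]) (simp add: mult.assoc)
  qed simp
  then have "\<exists>q. \<forall>m. of_nat (fact m) * q m = w ^ m \<and> (1 \<le> m \<longrightarrow> c dvd q m)"
    by (intro choice allI)
  then obtain q where q: "\<And>m. of_nat (fact m) * q m = w ^ m" "\<And>m. 1 \<le> m \<Longrightarrow> c dvd q m"
    by blast
  have "of_nat (Suc m) * q (Suc m) = w * q m" for m
  proof -
    have "(of_nat (fact m) :: 'a) \<noteq> 0" using inj by (metis injD of_nat_0 fact_nonzero)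
    moreover have "of_nat (fact m) * (of_nat (Suc m) * q (Suc m)) = of_nat (fact m) * (w * q m)"
    proof -
      have "(of_nat (fact (Suc m)) :: 'a) = of_nat (Suc m) * of_nat (fact m)"
        by (metis fact_Suc of_nat_id of_nat_mult)
      then have "of_nat (fact m) * (of_nat (Suc m) * q (Suc m)) = w ^ Suc m"
        using q(1)[of "Suc m"] by (simp only: mult_ac)
      also have "\<dots> = of_nat (fact m) * (w * q m)"
        using q(1)[of m] by (simp only: power_Suc mult_ac)
      finally show ?thesis .
    qed
    ultimately show ?thesis by simp
  qed
  moreover have "q 0 = 1" using q(1)[of 0] by simp
  ultimately show ?thesis using that q(2) by blast
qed

lemma fps_nth_X_deriv: "fps_nth (fps_X * fps_deriv f) n = of_nat n * fps_nth f n"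
  by (cases n) simp_all

definition fps_dilate :: "nat \<Rightarrow> (nat \<Rightarrow> 'a::zero) \<Rightarrow> 'a fps" where
  "fps_dilate i q = Abs_fps (\<lambda>N. if i dvd N then q (N div i) else 0)"

lemma fps_cong_one_dilate:
  assumes "1 \<le> i" "q 0 = 1" "\<And>m. 1 \<le> m \<Longrightarrow> c dvd q m"
  shows "fps_cong_one c (fps_dilate i q)"
  unfolding fps_cong_one_def
proof (intro conjI allI impI)
  show "fps_nth (fps_dilate i q) 0 = 1" using assms(2) by (simp add: fps_dilate_def)
  fix N :: nat assume "1 \<le> N"
  then have "1 \<le> N div i" if "i dvd N" using that assms(1) by (auto elim!: dvdE)
  then show "c dvd fps_nth (fps_dilate i q) N" by (simp add: fps_dilate_def assms(3))
qed

lemma fps_X_deriv_dilate: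
  fixes q :: "nat \<Rightarrow> 'a::comm_ring_1"
  assumes i: "1 \<le> i" and q_Suc: "\<And>m. of_nat (Suc m) * q (Suc m) = w * q m"
  shows "fps_X * fps_deriv (fps_dilate i q) = fps_dilate i q * (fps_const (of_nat i * w) * fps_X ^ i)"
proof (rule fps_ext)
  fix N
  let ?E = "fps_dilate i q"
  have "?E * (fps_const (of_nat i * w) * fps_X ^ i) = fps_const (of_nat i * w) * (?E * fps_X ^ i)"
    by (simp only: mult.left_commute)
  then have rhs: "fps_nth (?E * (fps_const (of_nat i * w) * fps_X ^ i)) N
      = (if N < i then 0 else of_nat i * w * fps_nth ?E (N - i))"
    by (simp only:) (simp add: fps_X_power_mult_right_nth mult.assoc)
  show "fps_nth (fps_X * fps_deriv ?E) N = fps_nth (?E * (fps_const (of_nat i * w) * fps_X ^ i)) N"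
    unfolding fps_nth_X_deriv rhs
  proof (cases "i dvd N")
    case True
    then obtain m where N: "N = i * m" ..
    show "of_nat N * fps_nth ?E N = (if N < i then 0 else of_nat i * w * fps_nth ?E (N - i))"
    proof (cases m)
      case 0
      then show ?thesis using N i by simp
    next
      case (Suc m')
      have "N - i = i * m'" using N Suc by simp
      then have E_N_i: "fps_nth ?E (N - i) = q m'" using i by (simp add: fps_dilate_def)
      have "of_nat N * fps_nth ?E N = of_nat i * (of_nat (Suc m') * q (Suc m'))"
        using N Suc i by (simp add: fps_dilate_def algebra_simps)
      also have "\<dots> = of_nat i * w * fps_nth ?E (N - i)"
        by (simp only: q_Suc E_N_i mult.assoc)
      finally show ?thesis using N Suc i by simp
    qed
  next
    case False
    moreover have "\<not> i dvd N - i" if "i \<le> N"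
      using False that dvd_add_triv_right_iff[of i "N - i"] by simp
    ultimately show "of_nat N * fps_nth ?E N = (if N < i then 0 else of_nat i * w * fps_nth ?E (N - i))"
      by (simp add: fps_dilate_def)
  qed
qed

lemma fps_exp_monomial_exists:
  fixes c w :: "'a::idom"
  assumes inj: "inj (of_nat :: nat \<Rightarrow> 'a)" and i: "1 \<le> i"
    and divided: "\<And>m. 1 \<le> m \<Longrightarrow> of_nat (fact m) * c dvd w ^ m"
  obtains E where "fps_cong_one c E" "fps_X * fps_deriv E = E * (fps_const (of_nat i * w) * fps_X ^ i)"
proof -
  obtain q where "q 0 = 1" "\<And>m. of_nat (Suc m) * q (Suc m) = w * q m" "\<And>m. 1 \<le> m \<Longrightarrow> c dvd q m"
    using divided_power_seq_exists[OF inj divided] by blast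
  then show ?thesis
    using that fps_cong_one_dilate[OF i] fps_X_deriv_dilate[OF i] by blast
qed

lemma fps_nth_sum_monomials:
  "fps_nth (\<Sum>i=1..d. fps_const (g i) * fps_X ^ i) j = (if 1 \<le> j \<and> j \<le> d then g j else 0)"
proof -
  have "fps_nth (\<Sum>i=1..d. fps_const (g i) * fps_X ^ i) j = (\<Sum>i=1..d. if j = i then g i else 0)"
    unfolding fps_sum_nth by (intro sum.cong) auto
  then show ?thesis by (simp add: sum.delta)
qed

lemma fps_exp_sum_exists:
  fixes c :: "'a::idom" and w :: "nat \<Rightarrow> 'a"
  assumes inj: "inj (of_nat :: nat \<Rightarrow> 'a)"
    and divided: "\<And>m x. 1 \<le> m \<Longrightarrow> c dvd x \<Longrightarrow> of_nat (fact m) * c dvd x ^ m"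
    and w: "\<And>i. 1 \<le> i \<Longrightarrow> i \<le> d \<Longrightarrow> c dvd w i"
  obtains G where "fps_cong_one c G"
    "fps_X * fps_deriv G = G * (\<Sum>i=1..d. fps_const (of_nat i * w i) * fps_X ^ i)"
proof -
  have "\<exists>G. fps_cong_one c G \<and> fps_X * fps_deriv G = G * (\<Sum>i=1..k. fps_const (of_nat i * w i) * fps_X ^ i)"
    if "k \<le> d" for k
    using that
  proof (induction k)
    case 0
    show ?case by (intro exI[of _ 1]) (simp add: fps_cong_one_def)
  next
    case (Suc k)
    obtain G where G: "fps_cong_one c G"
      "fps_X * fps_deriv G = G * (\<Sum>i=1..k. fps_const (of_nat i * w i) * fps_X ^ i)"
      using Suc by auto
    obtain E where E: "fps_cong_one c E"
      "fps_X * fps_deriv E = E * (fps_const (of_nat (Suc k) * w (Suc k)) * fps_X ^ Suc k)"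
      using fps_exp_monomial_exists[OF inj, of "Suc k" c "w (Suc k)"] divided w Suc.prems by auto
    have "fps_X * fps_deriv (E * G) = E * (fps_X * fps_deriv G) + (fps_X * fps_deriv E) * G"
      by (simp add: algebra_simps)
    also have "\<dots> = E * G * (\<Sum>i=1..Suc k. fps_const (of_nat i * w i) * fps_X ^ i)"
      unfolding G(2) E(2) by (simp add: algebra_simps)
    finally show ?case using fps_cong_one_mult[OF E(1) G(1)] by blast
  qed
  then show ?thesis using that by blast
qed

lemma newton_identities_dvd_diff:
  fixes a b u v :: "nat \<Rightarrow> 'a::idom" and c :: 'a
  assumes inj: "inj (of_nat :: nat \<Rightarrow> 'a)"
    and divided: "\<And>m x. 1 \<le> m \<Longrightarrow> c dvd x \<Longrightarrow> of_nat (fact m) * c dvd x ^ m"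
    and a: "newton_identities d a u" and b: "newton_identities d b v" and "a 0 = 1" "b 0 = 1"
    and uv: "\<And>i. 1 \<le> i \<Longrightarrow> i \<le> d \<Longrightarrow> of_nat i * c dvd u i - v i"
    and "m \<le> d"
  shows "c dvd a m - b m"
proof -
  have "\<exists>w. 1 \<le> i \<longrightarrow> i \<le> d \<longrightarrow> u i - v i = of_nat i * w \<and> c dvd w" for i
  proof (cases "1 \<le> i \<and> i \<le> d")
    case True
    then have "of_nat i * c dvd u i - v i" using uv by simp
    then obtain k where "u i - v i = of_nat i * c * k" by (rule dvdE)
    then show ?thesis by (intro exI[of _ "c * k"]) (simp add: mult.assoc)
  qed auto
  then have "\<exists>w. \<forall>i. 1 \<le> i \<longrightarrow> i \<le> d \<longrightarrow> u i - v i = of_nat i * w i \<and> c dvd w i"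
    by (intro choice allI)
  then obtain w where w: "\<And>i. 1 \<le> i \<Longrightarrow> i \<le> d \<Longrightarrow> u i - v i = of_nat i * w i \<and> c dvd w i"
    by blast
  define W where "W = (\<Sum>i=1..d. fps_const (of_nat i * w i) * fps_X ^ i)"
  obtain G where G: "fps_cong_one c G" "fps_X * fps_deriv G = G * W"
    using fps_exp_sum_exists[OF inj divided, of d w] w unfolding W_def by blast
  have W_nth: "fps_nth W i = (if 1 \<le> i \<and> i \<le> d then of_nat i * w i else 0)" for i
    unfolding W_def by (rule fps_nth_sum_monomials)
  have "newton_identities d (fps_nth (Abs_fps a * G)) v"
  proof (rule newton_identities_mult[OF a G(2)])
    show "fps_nth W 0 = 0" by (simp add: W_nth)
    fix i assume "1 \<le> i" "i \<le> d"
    then have "u i - v i = of_nat i * w i" using w by blast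
    with \<open>1 \<le> i\<close> \<open>i \<le> d\<close> show "u i = v i + fps_nth W i" by (simp add: W_nth diff_eq_eq add.commute)
  qed
  then have "fps_nth (Abs_fps a * G) m = b m"
  proof (rule newton_identities_unique[OF inj _ b _ \<open>m \<le> d\<close>])
    show "fps_nth (Abs_fps a * G) 0 = b 0"
      using G(1) \<open>a 0 = 1\<close> \<open>b 0 = 1\<close> by (simp add: fps_cong_one_def)
  qed
  then have "c dvd b m - a m"
    using fps_cong_one_sum_dvd[OF G(1), of "Abs_fps a" m] by simp
  then show ?thesis by (metis dvd_minus_iff minus_diff_eq)
qed

lemma elem_sym_char_poly:
  assumes "X \<in> carrier_mat d d"
  shows "elem_sym (char_poly X) k = (if k \<le> d then (-1) ^ k * coeff (char_poly X) (d - k) else 0)"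
  using degree_monic_char_poly[OF assms] by (simp add: elem_sym_def)

lemma eval_symfun_cong:
  fixes R S :: "'a::comm_ring_1 poly"
  assumes "\<And>k. c dvd elem_sym R k - elem_sym S k"
  shows "c dvd eval_symfun f R - eval_symfun f S"
proof (induction f)
  case (SAdd f g)
  have "eval_symfun (SAdd f g) R - eval_symfun (SAdd f g) S
      = (eval_symfun f R - eval_symfun f S) + (eval_symfun g R - eval_symfun g S)"
    by simp
  then show ?case using SAdd by (simp only:) (rule dvd_add)
next
  case (SMul f g)
  have "eval_symfun f R * eval_symfun g R - eval_symfun f S * eval_symfun g S
      = eval_symfun f R * (eval_symfun g R - eval_symfun g S) + (eval_symfun f R - eval_symfun f S) * eval_symfun g S"
    by (simp add: algebra_simps)
  then show ?case using SMul by (simp add: dvd_add dvd_mult dvd_mult2)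
qed (simp_all add: assms)

context divided_power_dvr
begin

lemma mat_trace_pow_cong_pi:
  assumes "M \<in> carrier_mat d d" "N \<in> carrier_mat d d"
    and "\<And>i j. i < d \<Longrightarrow> j < d \<Longrightarrow> \<pi> dvd M $$ (i, j) - N $$ (i, j)"
  shows "of_nat n * \<pi> dvd mat_trace (M ^\<^sub>m n) - mat_trace (N ^\<^sub>m n)"
  using of_nat_mult_pi_dvd_pi_power assms by (rule mat_trace_pow_cong)

lemma char_poly_pow_coeff_cong:
  assumes M: "M \<in> carrier_mat d d" and N: "N \<in> carrier_mat d d"
    and cong: "\<And>i j. i < d \<Longrightarrow> j < d \<Longrightarrow> \<pi> dvd M $$ (i, j) - N $$ (i, j)"
    and "k \<le> d"
  shows "of_nat n * \<pi> dvd coeff (char_poly (M ^\<^sub>m n)) (d - k) - coeff (char_poly (N ^\<^sub>m n)) (d - k)"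
proof -
  have Mn: "M ^\<^sub>m n \<in> carrier_mat d d" and Nn: "N ^\<^sub>m n \<in> carrier_mat d d"
    using M N by simp_all
  have divided: "of_nat (fact m) * (of_nat n * \<pi>) dvd x ^ m" if "1 \<le> m" "of_nat n * \<pi> dvd x" for m x
    using that by (intro fact_mult_dvd_power) simp_all
  have traces: "of_nat i * (of_nat n * \<pi>) dvd mat_trace ((M ^\<^sub>m n) ^\<^sub>m i) - mat_trace ((N ^\<^sub>m n) ^\<^sub>m i)"
    for i
    using mat_trace_pow_cong_pi[OF M N cong, of "n * i"]
    by (simp add: pow_mat_mult[OF M] pow_mat_mult[OF N] mult_ac)
  have leading: "coeff (char_poly (M ^\<^sub>m n)) (d - 0) = 1" "coeff (char_poly (N ^\<^sub>m n)) (d - 0) = 1"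
    using degree_monic_char_poly[OF Mn] degree_monic_char_poly[OF Nn] by simp_all
  show ?thesis
    by (rule newton_identities_dvd_diff[OF inj_of_nat divided newton_identities_char_poly[OF Mn]
          newton_identities_char_poly[OF Nn] leading traces \<open>k \<le> d\<close>])
qed

lemma eval_symfun_char_poly_pow_cong:
  assumes M: "M \<in> carrier_mat d d" and N: "N \<in> carrier_mat d d"
    and cong: "\<And>i j. i < d \<Longrightarrow> j < d \<Longrightarrow> \<pi> dvd M $$ (i, j) - N $$ (i, j)"
  shows "of_nat n * \<pi> dvd eval_symfun f (char_poly (M ^\<^sub>m n)) - eval_symfun f (char_poly (N ^\<^sub>m n))"
proof (rule eval_symfun_cong)
  fix k
  show "of_nat n * \<pi> dvd elem_sym (char_poly (M ^\<^sub>m n)) k - elem_sym (char_poly (N ^\<^sub>m n)) k"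
  proof (cases "k \<le> d")
    case True
    then show ?thesis
      using char_poly_pow_coeff_cong[OF M N cong True, of n]
      by (simp add: elem_sym_char_poly[OF pow_carrier_mat[OF M]]
          elem_sym_char_poly[OF pow_carrier_mat[OF N]] flip: right_diff_distrib)
  qed (simp add: elem_sym_char_poly[OF pow_carrier_mat[OF M]] elem_sym_char_poly[OF pow_carrier_mat[OF N]])
qed

end

lemma degree_eq_if_monic_coeff_cong:
  fixes P Q :: "'a::comm_ring_1 poly"
  assumes "monic P" "monic Q" "\<not> \<pi> dvd 1" "\<And>i. \<pi> dvd coeff P i - coeff Q i"
  shows "degree P = degree Q"
proof (rule ccontr)
  assume "degree P \<noteq> degree Q"
  then consider "degree P < degree Q" | "degree Q < degree P" by linarith
  then have "\<pi> dvd 1"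
  proof cases
    case 1
    then show ?thesis using assms(2) assms(4)[of "degree Q"] by (simp add: coeff_eq_0)
  next
    case 2
    then show ?thesis using assms(1) assms(4)[of "degree P"] by (simp add: coeff_eq_0)
  qed
  with assms(3) show False ..
qed

lemma companion_carrier: "companion P \<in> carrier_mat (degree P) (degree P)"
  unfolding companion_def Let_def by simp

lemma companion_index_cong:
  assumes "degree P = degree Q" "\<And>i. \<pi> dvd coeff P i - coeff Q i"
    and "i < degree P" "j < degree P"
  shows "\<pi> dvd companion P $$ (i, j) - companion Q $$ (i, j)"
proof -
  have "\<pi> dvd coeff Q i - coeff P i" using assms(2)[of i] by (metis dvd_minus_iff minus_diff_eq)
  then show ?thesis using assms by (simp add: companion_def Let_def)
qed

lemma power_sum_poly_eq_mat_trace: "power_sum_poly P n = mat_trace (companion P ^\<^sub>m n)"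
  using companion_carrier[of P] by (simp add: power_sum_poly_def mat_trace_def)

theorem proposition6p5:
  fixes p :: nat and \<pi> :: "'a::idom" and P Q :: "'a poly"
  assumes "padic_integer_ring p \<pi>"
    and "divided_power_max_ideal p \<pi>"
    and "monic P" and "monic Q"
    and "\<forall>i. \<pi> dvd (coeff P i - coeff Q i)"
  shows "(\<forall>n \<ge> 1. \<forall>f. of_nat n * \<pi> dvd
            (eval_symfun f (pow_roots_poly P n) - eval_symfun f (pow_roots_poly Q n)))
       \<and> (\<forall>n \<ge> 1. of_nat n * \<pi> dvd (power_sum_poly P n - power_sum_poly Q n))"
proof -
  interpret divided_power_dvr p \<pi> using assms(1,2) by (rule divided_power_dvr_if_padic)
  define d where "d = degree P"
  have deg: "degree Q = d"
    using degree_eq_if_monic_coeff_cong[OF assms(3,4) pi_not_unit] assms(5) by (simp add: d_def)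
  have CP: "companion P \<in> carrier_mat d d" and CQ: "companion Q \<in> carrier_mat d d"
    using companion_carrier[of P] companion_carrier[of Q] deg by (simp_all add: d_def)
  have cong: "\<pi> dvd companion P $$ (i, j) - companion Q $$ (i, j)" if "i < d" "j < d" for i j
    using companion_index_cong[of P Q] assms(5) deg that by (simp add: d_def)
  show ?thesis
    using eval_symfun_char_poly_pow_cong[OF CP CQ cong] mat_trace_pow_cong_pi[OF CP CQ cong]
    by (simp add: pow_roots_poly_def power_sum_poly_eq_mat_trace)
qed

end
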